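(* Consider RejectionSampling run on $P\subseteq\mathbb{R}^d$ and $k$ with parameter $c>1$, and assume the LSH data structure is successful. Then the expected number of iterations of the while-loop is $O(c^2d^2k)$.
   Context: $P\subseteq\mathbb{R}^d$ has $n$ points; $\mathrm{Dist}(x,y)=\|x-y\|_2$, $\mathrm{Dist}(x,C)=\min_{y\in C}\mathrm{Dist}(x,y)$. Tree embedding: compute $\mathrm{MaxDist}$, an upper bound on the maximum pairwise distance within factor $2$ of it; add a uniformly random shift $s\in[0,\mathrm{MaxDist}]$ to each coordinate of all points; the root (height $0$) is the axis-aligned cube of side $2\,\mathrm{MaxDist}$ centered at an input point; recursively each node cube of side $L$ at height $i$ is split into $2^d$ subcubes of side $L/2$, nonempty ones becoming children connected by edges of weight $\sqrt d\,\mathrm{MaxDist}/2^i$, until each cube holds at most one point. $\mathrm{TreeDist}_T$ is the shortest-path distance in tree $T$; the multi-tree embedding has three such trees with independent shifts, $\mathrm{MultiTreeDist}$ is the minimum of the three tree distances, $\mathrm{MultiTreeDist}(p,S)=\min_{q\in S}\mathrm{MultiTreeDist}(p,q)$. MultiTreeSample() returns each $x\in P$ with probability $\mathrm{MultiTreeDist}(x,S)^2/\sum_{y\in P}\mathrm{MultiTreeDist}(y,S)^2$, where $S$ is the set of points opened so far by MultiTreeOpen (with $\mathrm{MultiTreeDist}(x,\emptyset)^2$ a constant $M$ independent of $x$). LSH data structure (parameter $c$): supports Insert$(p)$ and Query$(p)$; it is successful if Query$(p)$ always returns an inserted point at distance at most $c\cdot\delta$ from $p$, where $\delta$ is the minimum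 distance from $p$ to an inserted point. RejectionSampling$(P,k)$: $S\leftarrow\emptyset$; build the multi-tree embedding; while $|S|<k$: $x\leftarrow$ MultiTreeSample(); with probability $\min\{1,\mathrm{Dist}(x,\mathrm{Query}(x))^2/(c^2\,\mathrm{MultiTreeDist}(x,S)^2)\}$ (probability $1$ when $S=\emptyset$): $S\leftarrow S\cup\{x\}$, MultiTreeOpen$(x)$, Insert$(x)$. Output $S$. *)

theory Defs
  imports "HOL-Probability.Probability"
begin

text \<open>Points of R^d are represented as functions nat => real that vanish outside {..<d}.\<close>
type_synonym pt = "nat \<Rightarrow> real"

definition in_Rd :: "nat \<Rightarrow> pt \<Rightarrow> bool" where
  "in_Rd d x \<longleftrightarrow> (\<forall>i\<ge>d. x i = 0)"

definition Dist :: "nat \<Rightarrow> pt \<Rightarrow> pt \<Rightarrow> real" where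
  "Dist d x y = sqrt (\<Sum>i<d. (x i - y i)^2)"

definition max_pair_dist :: "nat \<Rightarrow> pt set \<Rightarrow> real" where
  "max_pair_dist d P = Max {Dist d x y | x y. x \<in> P \<and> y \<in> P}"

text \<open>Quadtree (one tree of the embedding) with parameter MaxDist = M, root cube of side 2M
  centred at the input point p0, and all points shifted by s in every coordinate.\<close>
definition same_node :: "nat \<Rightarrow> real \<Rightarrow> pt \<Rightarrow> real \<Rightarrow> nat \<Rightarrow> pt \<Rightarrow> pt \<Rightarrow> bool" where
  "same_node d M p0 s h x y \<longleftrightarrow>
     h = 0 \<or> (\<forall>i<d. \<lfloor>(x i + s - (p0 i - M)) / (2 * M / 2^h)\<rfloor>
                   = \<lfloor>(y i + s - (p0 i - M)) / (2 * M / 2^h)\<rfloor>)"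

definition leaf_height :: "nat \<Rightarrow> pt set \<Rightarrow> real \<Rightarrow> pt \<Rightarrow> real \<Rightarrow> pt \<Rightarrow> nat" where
  "leaf_height d P M p0 s x = (LEAST h. \<forall>y\<in>P. y \<noteq> x \<longrightarrow> \<not> same_node d M p0 s h x y)"

definition lca_height :: "nat \<Rightarrow> real \<Rightarrow> pt \<Rightarrow> real \<Rightarrow> pt \<Rightarrow> pt \<Rightarrow> nat" where
  "lca_height d M p0 s x y = (LEAST h. \<not> same_node d M p0 s (Suc h) x y)"

text \<open>Weight of an edge between a node at height j and its child at height j+1.\<close>
definition edge_weight :: "nat \<Rightarrow> real \<Rightarrow> nat \<Rightarrow> real" where
  "edge_weight d M j = sqrt (real d) * M / 2^j"

definition TreeDist :: "nat \<Rightarrow> pt set \<Rightarrow> real \<Rightarrow> pt \<Rightarrow> real \<Rightarrow> pt \<Rightarrow> pt \<Rightarrow> real" where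
  "TreeDist d P M p0 s x y =
     (if x = y then 0 else
        (\<Sum>j\<in>{lca_height d M p0 s x y..<leaf_height d P M p0 s x}. edge_weight d M j)
      + (\<Sum>j\<in>{lca_height d M p0 s x y..<leaf_height d P M p0 s y}. edge_weight d M j))"

definition MultiTreeDist ::
  "nat \<Rightarrow> pt set \<Rightarrow> real \<Rightarrow> pt \<Rightarrow> real \<times> real \<times> real \<Rightarrow> pt \<Rightarrow> pt \<Rightarrow> real" where
  "MultiTreeDist d P M p0 ss x y =
     min (TreeDist d P M p0 (fst ss) x y)
         (min (TreeDist d P M p0 (fst (snd ss)) x y) (TreeDist d P M p0 (snd (snd ss)) x y))"

text \<open>Distance to the set of opened points S (given as the list of opened points, in order);
  for S empty its square is the constant 1 (any constant independent of x gives the same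
  sampling distribution).\<close>
definition MultiTreeDist_set ::
  "nat \<Rightarrow> pt set \<Rightarrow> real \<Rightarrow> pt \<Rightarrow> real \<times> real \<times> real \<Rightarrow> pt list \<Rightarrow> pt \<Rightarrow> real" where
  "MultiTreeDist_set d P M p0 ss S x =
     (if S = [] then 1 else Min ((\<lambda>y. MultiTreeDist d P M p0 ss x y) ` set S))"

definition sample_prob ::
  "nat \<Rightarrow> pt set \<Rightarrow> real \<Rightarrow> pt \<Rightarrow> real \<times> real \<times> real \<Rightarrow> pt list \<Rightarrow> pt \<Rightarrow> real" where
  "sample_prob d P M p0 ss S x =
     (MultiTreeDist_set d P M p0 ss S x)^2 / (\<Sum>y\<in>P. (MultiTreeDist_set d P M p0 ss S y)^2)"

text \<open>LSH data structure: Query, as a function of the list of inserted points and the query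
  point.\<close>
definition lsh_successful :: "nat \<Rightarrow> real \<Rightarrow> pt set \<Rightarrow> (pt list \<Rightarrow> pt \<Rightarrow> pt) \<Rightarrow> bool" where
  "lsh_successful d c P Query \<longleftrightarrow>
     (\<forall>S x. S \<noteq> [] \<and> set S \<subseteq> P \<and> x \<in> P \<longrightarrow>
        Query S x \<in> set S \<and> Dist d x (Query S x) \<le> c * Min ((\<lambda>y. Dist d x y) ` set S))"

definition accept_prob ::
  "nat \<Rightarrow> pt set \<Rightarrow> real \<Rightarrow> real \<Rightarrow> pt \<Rightarrow> real \<times> real \<times> real \<Rightarrow> (pt list \<Rightarrow> pt \<Rightarrow> pt)
   \<Rightarrow> pt list \<Rightarrow> pt \<Rightarrow> real" where
  "accept_prob d P c M p0 ss Query S x =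
     (if S = [] then 1
      else min 1 ((Dist d x (Query S x))^2 / (c^2 * (MultiTreeDist_set d P M p0 ss S x)^2)))"

text \<open>One-step equation for the expected number of remaining while-loop iterations from the
  state S (list of opened points).  The expected number of iterations is the least fixed point.\<close>
definition iter_step ::
  "nat \<Rightarrow> pt set \<Rightarrow> nat \<Rightarrow> real \<Rightarrow> real \<Rightarrow> pt \<Rightarrow> real \<times> real \<times> real \<Rightarrow> (pt list \<Rightarrow> pt \<Rightarrow> pt)
   \<Rightarrow> (pt list \<Rightarrow> ennreal) \<Rightarrow> pt list \<Rightarrow> ennreal" where
  "iter_step d P k c M p0 ss Query F S =
     (if k \<le> length S then 0
      else 1 + (\<Sum>x\<in>P. ennreal (sample_prob d P M p0 ss S x) *
                  (ennreal (accept_prob d P c M p0 ss Query S x) * F (S @ [x])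
                   + ennreal (1 - accept_prob d P c M p0 ss Query S x) * F S)))"

definition expected_iters_fixed ::
  "nat \<Rightarrow> pt set \<Rightarrow> nat \<Rightarrow> real \<Rightarrow> real \<Rightarrow> pt \<Rightarrow> (pt list \<Rightarrow> pt \<Rightarrow> pt)
   \<Rightarrow> real \<times> real \<times> real \<Rightarrow> ennreal" where
  "expected_iters_fixed d P k c M p0 Query ss = lfp (iter_step d P k c M p0 ss Query) []"

definition shift_distr :: "real \<Rightarrow> real measure" where
  "shift_distr M = (if 0 < M then uniform_measure lborel {0..M} else return lborel 0)"

definition expected_iterations ::
  "nat \<Rightarrow> pt set \<Rightarrow> nat \<Rightarrow> real \<Rightarrow> real \<Rightarrow> pt \<Rightarrow> (pt list \<Rightarrow> pt \<Rightarrow> pt) \<Rightarrow> ennreal" where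
  "expected_iterations d P k c M p0 Query =
     (\<integral>\<^sup>+ ss. expected_iters_fixed d P k c M p0 Query ss
        \<partial>(shift_distr M \<Otimes>\<^sub>M (shift_distr M \<Otimes>\<^sub>M shift_distr M)))"

end

theory Submission
  imports Defs
begin

text \<open>Conditioned on the shifts, a round of the loop opens \<open>x\<close> with probability
  \<open>sample_prob \<cdot> accept_prob = p \<cdot> Dist(x, Query x)\<^sup>2 / \<Sum>\<^sub>y Dist(y, Query y)\<^sup>2\<close>, where
  \<open>p = \<Sum>\<^sub>y Dist(y, Query y)\<^sup>2 / (c\<^sup>2 \<Sum>\<^sub>y MultiTreeDist(y, S)\<^sup>2)\<close> is the success probability of
  the round; this uses that tree distances dominate Euclidean distances, so that the minimum
  in the acceptance probability is never truncated.  Hence the law of the sequence of opened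
  points does not depend on the shifts, and the number of rounds spent on a fixed \<open>S\<close> is
  geometric with mean \<open>1 / p\<close>.  Its expectation over the shifts is at most
  \<open>c\<^sup>2 \<Sum>\<^sub>y E[MultiTreeDist(y, Query y)\<^sup>2] / \<Sum>\<^sub>y Dist(y, Query y)\<^sup>2\<close>, and
  \<open>E[MultiTreeDist(x, y)\<^sup>2] = O(d\<^sup>2 Dist(x, y)\<^sup>2)\<close>: the tree distance is at most
  \<open>4 \<surd>d M / 2\<^sup>l\<close> when the common ancestor has height \<open>l\<close>, and all three trees separate
  \<open>x\<close> and \<open>y\<close> at height \<open>l + 1\<close> with probability at most \<open>(3 \<surd>d Dist(x, y) 2\<^sup>l / M)\<^sup>3\<close>.
  Summing over the \<open>k\<close> opened points gives the bound \<open>880 c\<^sup>2 d\<^sup>2 k\<close>.\<close>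

subsection \<open>Euclidean distance\<close>

lemma Dist_nonneg: "0 \<le> Dist d x y"
  unfolding Dist_def by (simp add: sum_nonneg)

lemma Dist_self [simp]: "Dist d x x = 0"
  unfolding Dist_def by simp

lemma in_Rd_neq_imp_coord_neq:
  assumes "in_Rd d x" "in_Rd d y" "x \<noteq> y"
  obtains i where "i < d" "x i \<noteq> y i"
  using assms unfolding in_Rd_def by (metis ext not_le)

lemma Dist_pos:
  assumes "in_Rd d x" "in_Rd d y" "x \<noteq> y"
  shows "0 < Dist d x y"
proof -
  obtain i where i: "i < d" "x i \<noteq> y i" using in_Rd_neq_imp_coord_neq assms .
  have "0 < (x i - y i)^2" using i by simp
  also have "\<dots> \<le> (\<Sum>j<d. (x j - y j)^2)"
    using i by (intro member_le_sum) auto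
  finally show ?thesis unfolding Dist_def by simp
qed

lemma Dist_le_sqrt_dim_mult:
  assumes "\<And>i. i < d \<Longrightarrow> \<bar>x i - y i\<bar> \<le> L"
  shows "Dist d x y \<le> sqrt (real d) * L"
proof -
  have L: "0 \<le> L" if "0 < d" using assms[of 0] that by linarith
  have "(\<Sum>i<d. (x i - y i)^2) \<le> (\<Sum>i<d. L^2)"
    using assms by (intro sum_mono) (metis abs_ge_zero lessThan_iff power2_abs power_mono)
  then have "Dist d x y \<le> sqrt (real d * L^2)" unfolding Dist_def by simp
  also have "\<dots> = sqrt (real d) * L" using L by (cases "d = 0") (simp_all add: real_sqrt_mult)
  finally show ?thesis .
qed

lemma sum_abs_diff_le_sqrt_dim_Dist: "(\<Sum>i<d. \<bar>x i - y i\<bar>) \<le> sqrt (real d) * Dist d x y"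
proof -
  have "(\<Sum>i<d. 1 * \<bar>x i - y i\<bar>)^2 \<le> (\<Sum>i<d. 1^2) * (\<Sum>i<d. \<bar>x i - y i\<bar>^2)"
    by (rule Cauchy_Schwarz_ineq_sum)
  then have "(\<Sum>i<d. \<bar>x i - y i\<bar>)^2 \<le> real d * (\<Sum>i<d. (x i - y i)^2)" by simp
  then have "sqrt ((\<Sum>i<d. \<bar>x i - y i\<bar>)^2) \<le> sqrt (real d * (\<Sum>i<d. (x i - y i)^2))"
    using real_sqrt_le_mono by blast
  then show ?thesis unfolding Dist_def by (simp add: real_sqrt_mult sum_nonneg)
qed

lemma Dist_le_max_pair_dist:
  assumes "finite P" "x \<in> P" "y \<in> P"
  shows "Dist d x y \<le> max_pair_dist d P"
proof -
  have "finite {Dist d x y | x y. x \<in> P \<and> y \<in> P}"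
    using assms(1) by (intro finite_image_set2) auto
  then show ?thesis unfolding max_pair_dist_def using assms by (intro Max_ge) auto
qed

subsection \<open>The quadtree\<close>

lemma floor_divide_half: "\<lfloor>(u::real) / L\<rfloor> = \<lfloor>u / (L / 2)\<rfloor> div 2"
proof -
  have "u / L = (u / (L / 2)) / real_of_int 2" by simp
  then show ?thesis using floor_divide_real_eq_div[of 2 "u / (L / 2)"] by simp
qed

lemma same_node_0 [simp]: "same_node d M p0 s 0 x y"
  unfolding same_node_def by simp

lemma same_node_commute: "same_node d M p0 s h x y = same_node d M p0 s h y x"
  unfolding same_node_def by auto

lemma same_node_SucD: "same_node d M p0 s (Suc h) x y \<Longrightarrow> same_node d M p0 s h x y"
  unfolding same_node_def
  using floor_divide_half[of "_ + s - (p0 _ - M)" "2 * M / 2 ^ h"] by (cases "h = 0") auto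

lemma same_node_mono: "j \<le> h \<Longrightarrow> same_node d M p0 s h x y \<Longrightarrow> same_node d M p0 s j x y"
  by (induction h rule: dec_induct) (auto dest: same_node_SucD)

lemma same_node_imp_coord_diff_less:
  assumes "0 < h" "0 < M" "same_node d M p0 s h x y" "i < d"
  shows "\<bar>x i - y i\<bar> < 2 * M / 2^h"
proof -
  define L where "L = 2 * M / 2^h"
  have L: "0 < L" using assms unfolding L_def by simp
  have "\<lfloor>(x i + s - (p0 i - M)) / L\<rfloor> = \<lfloor>(y i + s - (p0 i - M)) / L\<rfloor>"
    using assms unfolding same_node_def L_def by auto
  then have "\<bar>(x i + s - (p0 i - M)) / L - (y i + s - (p0 i - M)) / L\<bar> < 1"
    using floor_correct[of "(x i + s - (p0 i - M)) / L"]
      floor_correct[of "(y i + s - (p0 i - M)) / L"] by linarith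
  also have "(x i + s - (p0 i - M)) / L - (y i + s - (p0 i - M)) / L = (x i - y i) / L"
    by (simp add: diff_divide_distrib[symmetric])
  finally show ?thesis using L unfolding L_def[symmetric] by (simp add: abs_divide divide_less_eq)
qed

lemma eventually_not_same_node:
  assumes "in_Rd d x" "in_Rd d y" "x \<noteq> y" "0 < M"
  shows "eventually (\<lambda>h. \<not> same_node d M p0 s h x y) sequentially"
proof -
  obtain i where i: "i < d" "x i \<noteq> y i" using in_Rd_neq_imp_coord_neq assms(1-3) .
  obtain n where n: "2 * M / \<bar>x i - y i\<bar> < 2 ^ n"
    using real_arch_pow[of 2 "2 * M / \<bar>x i - y i\<bar>"] by auto
  have "2 * M / 2 ^ h \<le> \<bar>x i - y i\<bar>" if "n \<le> h" for h
  proof -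
    have "2 * M < \<bar>x i - y i\<bar> * 2 ^ n" using n i by (simp add: divide_less_eq mult.commute)
    also have "\<dots> \<le> \<bar>x i - y i\<bar> * 2 ^ h" using that by (intro mult_left_mono power_increasing) auto
    finally show ?thesis by (simp add: divide_le_eq mult.commute)
  qed
  then have "\<not> same_node d M p0 s h x y" if "n \<le> h" "0 < h" for h
    using same_node_imp_coord_diff_less[OF that(2) assms(4) _ i(1)] that by force
  then have "\<forall>h\<ge>Suc n. \<not> same_node d M p0 s h x y" by auto
  then show ?thesis unfolding eventually_sequentially by blast
qed

lemma not_same_node_Suc_lca_height:
  assumes "in_Rd d x" "in_Rd d y" "x \<noteq> y" "0 < M"
  shows "\<not> same_node d M p0 s (Suc (lca_height d M p0 s x y)) x y"
proof -
  obtain h where "\<not> same_node d M p0 s (Suc h) x y"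
    using eventually_not_same_node[OF assms] unfolding eventually_sequentially by (metis le_add2 plus_1_eq_Suc)
  then show ?thesis unfolding lca_height_def by (rule LeastI)
qed

lemma same_node_lca_height: "same_node d M p0 s (lca_height d M p0 s x y) x y"
proof (cases "lca_height d M p0 s x y")
  case (Suc j)
  then have "j < lca_height d M p0 s x y" by simp
  then show ?thesis using Suc unfolding lca_height_def by (metis not_less_Least)
qed simp

lemma lca_height_commute: "lca_height d M p0 s x y = lca_height d M p0 s y x"
  unfolding lca_height_def by (simp add: same_node_commute)

lemma lca_height_less_leaf_height:
  assumes "finite P" "\<forall>z\<in>P. in_Rd d z" "x \<in> P" "y \<in> P" "x \<noteq> y" "0 < M"
  shows "lca_height d M p0 s x y < leaf_height d P M p0 s x"
proof (rule ccontr)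
  assume "\<not> ?thesis"
  then have "same_node d M p0 s (leaf_height d P M p0 s x) x y"
    using same_node_mono same_node_lca_height by (metis not_less)
  moreover have "\<exists>h. \<forall>z\<in>P. z \<noteq> x \<longrightarrow> \<not> same_node d M p0 s h x z"
  proof -
    have "eventually (\<lambda>h. \<forall>z\<in>P. z \<noteq> x \<longrightarrow> \<not> same_node d M p0 s h x z) sequentially"
      using assms by (intro eventually_ball_finite ballI)
        (auto intro: eventually_mono[OF eventually_not_same_node])
    then show ?thesis unfolding eventually_sequentially by blast
  qed
  then have "\<forall>z\<in>P. z \<noteq> x \<longrightarrow> \<not> same_node d M p0 s (leaf_height d P M p0 s x) x z"
    unfolding leaf_height_def by (rule LeastI_ex)
  ultimately show False using assms by auto
qed

lemma sum_edge_weight_le: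
  assumes "0 \<le> M"
  shows "(\<Sum>j\<in>{a..<b}. edge_weight d M j) \<le> 2 * edge_weight d M a"
proof -
  have "(\<Sum>j\<in>{a..<b}. edge_weight d M j) = edge_weight d M a * (\<Sum>i\<in>{0..<b - a}. (1/2) ^ i)"
    unfolding edge_weight_def sum_distrib_left sum.atLeastLessThan_shift_0[of _ a b]
    by (simp add: power_add power_divide)
  also have "\<dots> \<le> edge_weight d M a * 2"
    using assms geometric_sum_less[of "1/2::real" "{0..<b - a}"] unfolding edge_weight_def
    by (intro mult_left_mono) auto
  finally show ?thesis by simp
qed

lemma TreeDist_le:
  assumes "0 \<le> M"
  shows "TreeDist d P M p0 s x y \<le> 4 * edge_weight d M (lca_height d M p0 s x y)"
proof -
  let ?l = "lca_height d M p0 s x y"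
  have "0 \<le> edge_weight d M ?l" unfolding edge_weight_def using assms by simp
  then show ?thesis unfolding TreeDist_def
    using sum_edge_weight_le[OF assms, of d ?l "leaf_height d P M p0 s x"]
      sum_edge_weight_le[OF assms, of d ?l "leaf_height d P M p0 s y"] by auto
qed

lemma TreeDist_nonneg: "0 \<le> M \<Longrightarrow> 0 \<le> TreeDist d P M p0 s x y"
  unfolding TreeDist_def edge_weight_def by (auto intro!: add_nonneg_nonneg sum_nonneg)

lemma TreeDist_ge:
  assumes "finite P" "\<forall>z\<in>P. in_Rd d z" "x \<in> P" "y \<in> P" "x \<noteq> y" "0 < M"
  shows "2 * edge_weight d M (lca_height d M p0 s x y) \<le> TreeDist d P M p0 s x y"
proof -
  let ?l = "lca_height d M p0 s x y"
  have "?l < leaf_height d P M p0 s x" "?l < leaf_height d P M p0 s y"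
    using lca_height_less_leaf_height[of P d] lca_height_commute assms by metis+
  moreover have "\<And>j. 0 \<le> edge_weight d M j" unfolding edge_weight_def using assms by simp
  ultimately have "edge_weight d M ?l \<le> (\<Sum>j\<in>{?l..<leaf_height d P M p0 s x}. edge_weight d M j)"
    "edge_weight d M ?l \<le> (\<Sum>j\<in>{?l..<leaf_height d P M p0 s y}. edge_weight d M j)"
    by (auto intro: member_le_sum)
  then show ?thesis unfolding TreeDist_def using assms by auto
qed

lemma Dist_le_edge_weight_lca_height:
  assumes "finite P" "x \<in> P" "y \<in> P" "0 < M" "1 \<le> d" "max_pair_dist d P \<le> M"
  shows "Dist d x y \<le> 2 * edge_weight d M (lca_height d M p0 s x y)"
proof (cases "lca_height d M p0 s x y")
  case 0
  have "Dist d x y \<le> M" using Dist_le_max_pair_dist assms by (metis order_trans)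
  also have "\<dots> \<le> sqrt (real d) * M" using assms by simp
  also have "\<dots> \<le> 2 * (sqrt (real d) * M)" using assms by simp
  finally show ?thesis using 0 unfolding edge_weight_def by simp
next
  case (Suc l)
  have "\<bar>x i - y i\<bar> \<le> 2 * M / 2 ^ lca_height d M p0 s x y" if "i < d" for i
    by (intro less_imp_le same_node_imp_coord_diff_less[OF _ assms(4) same_node_lca_height that])
      (simp add: Suc)
  then have "Dist d x y \<le> sqrt (real d) * (2 * M / 2 ^ lca_height d M p0 s x y)"
    by (rule Dist_le_sqrt_dim_mult)
  then show ?thesis unfolding edge_weight_def by (simp add: mult_ac)
qed

lemma Dist_le_TreeDist:
  assumes "finite P" "\<forall>z\<in>P. in_Rd d z" "x \<in> P" "y \<in> P" "0 < M" "1 \<le> d" "max_pair_dist d P \<le> M"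
  shows "Dist d x y \<le> TreeDist d P M p0 s x y"
  using Dist_le_edge_weight_lca_height[of P x y M d p0 s] TreeDist_ge[of P d x y M p0 s] assms
  by (cases "x = y") (auto simp: TreeDist_def)

lemma MultiTreeDist_le_TreeDist:
  "MultiTreeDist d P M p0 ss x y \<le> TreeDist d P M p0 (fst ss) x y"
  "MultiTreeDist d P M p0 ss x y \<le> TreeDist d P M p0 (fst (snd ss)) x y"
  "MultiTreeDist d P M p0 ss x y \<le> TreeDist d P M p0 (snd (snd ss)) x y"
  unfolding MultiTreeDist_def by auto

lemma MultiTreeDist_nonneg: "0 \<le> M \<Longrightarrow> 0 \<le> MultiTreeDist d P M p0 ss x y"
  unfolding MultiTreeDist_def using TreeDist_nonneg by auto

lemma Dist_le_MultiTreeDist: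
  assumes "finite P" "\<forall>z\<in>P. in_Rd d z" "x \<in> P" "y \<in> P" "0 < M" "1 \<le> d" "max_pair_dist d P \<le> M"
  shows "Dist d x y \<le> MultiTreeDist d P M p0 ss x y"
  unfolding MultiTreeDist_def using Dist_le_TreeDist[OF assms] by auto

subsection \<open>Random shifts\<close>

lemma measurable_floor_neq [measurable]:
  assumes [measurable]: "f \<in> borel_measurable M" "g \<in> borel_measurable M"
  shows "Measurable.pred M (\<lambda>x. \<lfloor>f x :: real\<rfloor> \<noteq> \<lfloor>g x :: real\<rfloor>)"
proof -
  have [measurable]: "(\<lambda>x. real_of_int \<lfloor>f x\<rfloor>) \<in> borel_measurable M"
    "(\<lambda>x. real_of_int \<lfloor>g x\<rfloor>) \<in> borel_measurable M"
    using measurable_compose[OF assms(1) borel_measurable_real_floor]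
      measurable_compose[OF assms(2) borel_measurable_real_floor] by simp_all
  then have "Measurable.pred M (\<lambda>x. real_of_int \<lfloor>f x\<rfloor> \<noteq> real_of_int \<lfloor>g x\<rfloor>)"
    by measurable
  then show ?thesis by simp
qed

lemma floor_neq_imp_mem_grid_interval:
  fixes a b L s :: real
  assumes "0 < L" "a \<le> b" "0 \<le> s" "s \<le> M" "\<lfloor>(a + s) / L\<rfloor> \<noteq> \<lfloor>(b + s) / L\<rfloor>"
  shows "\<exists>n\<in>{\<lfloor>a / L\<rfloor> + 1..\<lfloor>(b + M) / L\<rfloor>}. s \<in> {of_int n * L - b..<of_int n * L - a}"
proof
  define n where "n = \<lfloor>(b + s) / L\<rfloor>"
  have "\<lfloor>(a + s) / L\<rfloor> \<le> n"
    unfolding n_def using assms by (intro floor_mono divide_right_mono) auto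
  then have lt: "\<lfloor>(a + s) / L\<rfloor> < n" using assms unfolding n_def by auto
  then have "a + s < of_int n * L" using assms by (simp add: floor_less_iff divide_less_eq)
  moreover have "of_int n \<le> (b + s) / L" unfolding n_def by simp
  then have "of_int n * L \<le> b + s" using assms by (simp add: le_divide_eq)
  ultimately show "s \<in> {of_int n * L - b..<of_int n * L - a}" by simp
  have "n \<le> \<lfloor>(b + M) / L\<rfloor>" unfolding n_def using assms by (intro floor_mono divide_right_mono) auto
  moreover have "\<lfloor>a / L\<rfloor> \<le> \<lfloor>(a + s) / L\<rfloor>" using assms by (intro floor_mono divide_right_mono) auto
  ultimately show "n \<in> {\<lfloor>a / L\<rfloor> + 1..\<lfloor>(b + M) / L\<rfloor>}" using lt by simp
qed

lemma card_grid_indices_le: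
  fixes a b L :: real
  assumes "0 < L" "a \<le> b" "0 \<le> M"
  shows "real (card {\<lfloor>a / L\<rfloor> + 1..\<lfloor>(b + M) / L\<rfloor>}) \<le> (b - a) / L + M / L + 1"
proof -
  have "real_of_int \<lfloor>(b + M) / L\<rfloor> - real_of_int \<lfloor>a / L\<rfloor> \<le> (b + M) / L - a / L + 1"
    using floor_correct[of "(b + M) / L"] floor_correct[of "a / L"] by linarith
  also have "\<dots> = (b - a) / L + M / L + 1" by (simp add: diff_divide_distrib add_divide_distrib)
  finally have "real_of_int \<lfloor>(b + M) / L\<rfloor> - real_of_int \<lfloor>a / L\<rfloor> \<le> (b - a) / L + M / L + 1" .
  moreover have "0 \<le> (b - a) / L + M / L + 1" using assms by simp
  ultimately show ?thesis by (simp add: nat_le_iff_add)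
qed

lemma emeasure_floor_neq_le_ordered:
  fixes a b L M :: real
  assumes L: "0 < L" "L \<le> M" and ab: "a \<le> b"
  shows "emeasure lborel {s\<in>{0..M}. \<lfloor>(a + s) / L\<rfloor> \<noteq> \<lfloor>(b + s) / L\<rfloor>} \<le> ennreal (3 * (b - a) * M / L)"
proof (cases "L < b - a")
  case True
  have "L * M \<le> 3 * (b - a) * M" using True L by (intro mult_right_mono) auto
  then have M: "M \<le> 3 * (b - a) * M / L" using L by (simp add: le_divide_eq mult.commute)
  have "emeasure lborel {s\<in>{0..M}. \<lfloor>(a + s) / L\<rfloor> \<noteq> \<lfloor>(b + s) / L\<rfloor>} \<le> emeasure lborel {0..M}"
    by (rule emeasure_mono) auto
  also have "\<dots> = ennreal M" using L by simp
  finally show ?thesis using M by (meson ennreal_leI order_trans)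
next
  case False
  let ?N = "{\<lfloor>a / L\<rfloor> + 1..\<lfloor>(b + M) / L\<rfloor>}"
  have "emeasure lborel {s\<in>{0..M}. \<lfloor>(a + s) / L\<rfloor> \<noteq> \<lfloor>(b + s) / L\<rfloor>}
      \<le> emeasure lborel (\<Union>n\<in>?N. {of_int n * L - b..<of_int n * L - a})"
    using floor_neq_imp_mem_grid_interval[OF L(1) ab] by (intro emeasure_mono) auto
  also have "\<dots> \<le> (\<Sum>n\<in>?N. emeasure lborel {of_int n * L - b..<of_int n * L - a})"
    by (rule emeasure_subadditive_finite) auto
  also have "\<dots> = ennreal (real (card ?N) * (b - a))"
    using ab by (simp add: ennreal_of_nat_eq_real_of_nat ennreal_mult'')
  also have "\<dots> \<le> ennreal (3 * (b - a) * M / L)"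
  proof (rule ennreal_leI)
    have "real (card ?N) * (b - a) \<le> ((b - a) / L + M / L + 1) * (b - a)"
      using card_grid_indices_le[of L a b M] L ab by (intro mult_right_mono) auto
    also have "\<dots> \<le> 3 * (M / L) * (b - a)"
    proof -
      have "(b - a) / L \<le> 1" "1 \<le> M / L" using False L by simp_all
      then show ?thesis using ab by (intro mult_right_mono) auto
    qed
    finally show "real (card ?N) * (b - a) \<le> 3 * (b - a) * M / L" by (simp add: mult_ac)
  qed
  finally show ?thesis .
qed

lemma emeasure_floor_neq_le:
  fixes a b L M :: real
  assumes "0 < L" "L \<le> M"
  shows "emeasure lborel {s\<in>{0..M}. \<lfloor>(a + s) / L\<rfloor> \<noteq> \<lfloor>(b + s) / L\<rfloor>} \<le> ennreal (3 * \<bar>b - a\<bar> * M / L)"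
proof (cases "a \<le> b")
  case False
  have "{s\<in>{0..M}. \<lfloor>(a + s) / L\<rfloor> \<noteq> \<lfloor>(b + s) / L\<rfloor>} = {s\<in>{0..M}. \<lfloor>(b + s) / L\<rfloor> \<noteq> \<lfloor>(a + s) / L\<rfloor>}"
    by auto
  then show ?thesis using emeasure_floor_neq_le_ordered[OF assms, of b a] False by simp
qed (use emeasure_floor_neq_le_ordered[OF assms] in simp)

lemma sets_shift_distr [simp, measurable_cong]: "sets (shift_distr M) = sets borel"
  unfolding shift_distr_def by auto

lemma space_shift_distr [simp]: "space (shift_distr M) = UNIV"
  unfolding shift_distr_def by auto

lemma prob_space_shift_distr: "prob_space (shift_distr M)"
  unfolding shift_distr_def by (auto intro!: prob_space_uniform_measure prob_space_return)

definition separating_shifts :: "nat \<Rightarrow> real \<Rightarrow> pt \<Rightarrow> nat \<Rightarrow> pt \<Rightarrow> pt \<Rightarrow> real set" where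
  "separating_shifts d M p0 h x y = {s. \<not> same_node d M p0 s h x y}"

lemma separating_shifts_eq:
  assumes "0 < h"
  shows "separating_shifts d M p0 h x y =
    {s. \<exists>i<d. \<lfloor>(x i - (p0 i - M) + s) / (2 * M / 2^h)\<rfloor> \<noteq> \<lfloor>(y i - (p0 i - M) + s) / (2 * M / 2^h)\<rfloor>}"
proof -
  have "\<And>z i s. z + s - (p0 i - M) = z - (p0 i - M) + (s :: real)" by simp
  then show ?thesis using assms unfolding separating_shifts_def same_node_def by (auto simp only:)
qed

lemma separating_shifts_sets: "separating_shifts d M p0 h x y \<in> sets borel"
proof (cases "h = 0")
  case False
  have "Measurable.pred borel (\<lambda>s. \<exists>i<d. \<lfloor>(x i - (p0 i - M) + s) / (2 * M / 2^h)\<rfloor>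
      \<noteq> \<lfloor>(y i - (p0 i - M) + s) / (2 * M / 2^h)\<rfloor>)"
    by measurable
  then show ?thesis using False by (simp add: separating_shifts_eq pred_def)
qed (simp add: separating_shifts_def)

lemma emeasure_separating_shifts_le:
  assumes M: "0 < M" and h: "0 < h"
  shows "emeasure (shift_distr M) (separating_shifts d M p0 h x y)
           \<le> ennreal (3 * (\<Sum>i<d. \<bar>x i - y i\<bar>) * 2^h / (2 * M))"
proof -
  define L where "L = 2 * M / 2^h"
  have L: "0 < L" "L \<le> M"
    using M h power_increasing[of 1 h "2::real"] unfolding L_def by (auto simp: divide_le_eq)
  let ?E = "\<lambda>i. {s\<in>{0..M}. \<lfloor>(x i - (p0 i - M) + s) / L\<rfloor> \<noteq> \<lfloor>(y i - (p0 i - M) + s) / L\<rfloor>}"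
  have sets_E: "?E i \<in> sets lborel" for i
    by measurable
  let ?A = "separating_shifts d M p0 h x y"
  let ?S = "\<Sum>i<d. \<bar>x i - y i\<bar>"
  have "emeasure lborel (?A \<inter> {0..M}) = emeasure lborel (\<Union>i<d. ?E i)"
    unfolding separating_shifts_eq[OF h] L_def by (rule arg_cong) auto
  also have "\<dots> \<le> (\<Sum>i<d. emeasure lborel (?E i))"
    using sets_E by (intro emeasure_subadditive_finite) auto
  also have "\<dots> \<le> (\<Sum>i<d. ennreal (3 * \<bar>x i - y i\<bar> * M / L))"
  proof (intro sum_mono)
    fix i
    show "emeasure lborel (?E i) \<le> ennreal (3 * \<bar>x i - y i\<bar> * M / L)"
      using emeasure_floor_neq_le[OF L, of "x i - (p0 i - M)" "y i - (p0 i - M)"]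
      by (simp add: abs_minus_commute)
  qed
  also have "\<dots> = ennreal (3 * ?S * M / L)"
    using L by (simp add: sum_ennreal sum_distrib_left sum_distrib_right sum_divide_distrib)
  finally have "emeasure lborel (?A \<inter> {0..M}) / ennreal M \<le> ennreal (3 * ?S * M / L) / ennreal M"
    by (rule divide_right_mono_ennreal)
  moreover have "emeasure (shift_distr M) ?A = emeasure lborel (?A \<inter> {0..M}) / ennreal M"
    unfolding shift_distr_def using M separating_shifts_sets[of d M p0 h x y]
    by (simp add: Int_commute)
  moreover have "ennreal (3 * ?S * M / L) / ennreal M = ennreal (3 * ?S * 2^h / (2 * M))"
    using M L by (subst divide_ennreal) (auto intro!: sum_nonneg simp: L_def)
  ultimately show ?thesis by simp
qed

subsection \<open>Expected squared multi-tree distance\<close>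

abbreviation shift_triple_distr :: "real \<Rightarrow> (real \<times> real \<times> real) measure" where
  "shift_triple_distr M \<equiv> shift_distr M \<Otimes>\<^sub>M (shift_distr M \<Otimes>\<^sub>M shift_distr M)"

lemma prob_space_shift_triple_distr: "prob_space (shift_triple_distr M)"
  by (intro prob_space_pair prob_space_shift_distr)

lemma emeasure_shift_triple_distr_cube:
  assumes "A \<in> sets borel"
  shows "emeasure (shift_triple_distr M) (A \<times> A \<times> A) = emeasure (shift_distr M) A ^ 3"
proof -
  interpret s1: prob_space "shift_distr M" by (rule prob_space_shift_distr)
  interpret s2: pair_prob_space "shift_distr M" "shift_distr M" ..
  have "emeasure (shift_triple_distr M) (A \<times> A \<times> A)
      = emeasure (shift_distr M) A * emeasure (shift_distr M \<Otimes>\<^sub>M shift_distr M) (A \<times> A)"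
    using assms by (intro s2.emeasure_pair_measure_Times) auto
  also have "emeasure (shift_distr M \<Otimes>\<^sub>M shift_distr M) (A \<times> A)
      = emeasure (shift_distr M) A * emeasure (shift_distr M) A"
    using assms by (intro s1.emeasure_pair_measure_Times) auto
  finally show ?thesis by (simp add: power3_eq_cube mult.assoc)
qed

definition scale_level :: "nat \<Rightarrow> real \<Rightarrow> pt \<Rightarrow> pt \<Rightarrow> nat" where
  "scale_level d M x y = (LEAST H. M \<le> 2^H * (sqrt (real d) * Dist d x y))"

lemma scale_level_le:
  assumes "0 < sqrt (real d) * Dist d x y"
  shows "M \<le> 2 ^ scale_level d M x y * (sqrt (real d) * Dist d x y)"
proof -
  obtain n where "M / (sqrt (real d) * Dist d x y) < 2 ^ n"
    using real_arch_pow[of 2] by auto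
  then have "M \<le> 2 ^ n * (sqrt (real d) * Dist d x y)" using assms by (simp add: divide_less_eq)
  then show ?thesis unfolding scale_level_def by (rule LeastI)
qed

lemma scale_level_less:
  assumes "0 < scale_level d M x y"
  shows "2 ^ scale_level d M x y * (sqrt (real d) * Dist d x y) < 2 * M"
proof -
  have "\<not> M \<le> 2 ^ (scale_level d M x y - 1) * (sqrt (real d) * Dist d x y)"
    using assms unfolding scale_level_def by (intro not_less_Least) simp
  moreover have "(2::real) ^ scale_level d M x y = 2 * 2 ^ (scale_level d M x y - 1)"
    using assms by (simp add: power_eq_if)
  ultimately show ?thesis by simp
qed

text \<open>The multi-tree distance is not easily seen to be measurable in the shifts, so it is
  bounded by a measurable majorant: if the deepest of the three common ancestors of \<open>x\<close>
  and \<open>y\<close> has height \<open>l < H\<close>, then all three shifts separate \<open>x\<close> and \<open>y\<close> at height \<open>l + 1\<close>.\<close>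
definition sq_multitree_majorant :: "nat \<Rightarrow> real \<Rightarrow> pt \<Rightarrow> pt \<Rightarrow> pt \<Rightarrow> real \<times> real \<times> real \<Rightarrow> ennreal" where
  "sq_multitree_majorant d M p0 x y ss = (if x = y then 0 else
     ennreal ((4 * edge_weight d M (scale_level d M x y))^2) +
     (\<Sum>l<scale_level d M x y. ennreal ((4 * edge_weight d M l)^2) *
        indicator (separating_shifts d M p0 (Suc l) x y \<times> separating_shifts d M p0 (Suc l) x y
                   \<times> separating_shifts d M p0 (Suc l) x y) ss))"

lemma borel_measurable_sq_multitree_majorant [measurable]:
  "sq_multitree_majorant d M p0 x y \<in> borel_measurable (shift_triple_distr M)"
proof -
  have [measurable]: "separating_shifts d M p0 h x y \<in> sets borel" for h
    by (rule separating_shifts_sets)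
  show ?thesis unfolding sq_multitree_majorant_def by measurable
qed

lemma edge_weight_antimono: "0 \<le> M \<Longrightarrow> a \<le> b \<Longrightarrow> edge_weight d M b \<le> edge_weight d M a"
  unfolding edge_weight_def by (intro divide_left_mono) (auto intro: power_increasing)

lemma sq_MultiTreeDist_le_majorant:
  assumes "in_Rd d x" "in_Rd d y" "0 < M"
  shows "ennreal ((MultiTreeDist d P M p0 ss x y)^2) \<le> sq_multitree_majorant d M p0 x y ss"
proof (cases "x = y")
  case False
  let ?lca = "\<lambda>s. lca_height d M p0 s x y"
  define l where "l = max (?lca (fst ss)) (max (?lca (fst (snd ss))) (?lca (snd (snd ss))))"
  define H where "H = scale_level d M x y"
  define A where "A = separating_shifts d M p0 (Suc l) x y"
  let ?w = "\<lambda>j. ennreal ((4 * edge_weight d M j)^2)"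
  have "l \<in> ?lca ` {fst ss, fst (snd ss), snd (snd ss)}"
    unfolding l_def max_def by auto
  then obtain s where s: "s \<in> {fst ss, fst (snd ss), snd (snd ss)}" "?lca s = l"
    by blast
  then have "MultiTreeDist d P M p0 ss x y \<le> TreeDist d P M p0 s x y"
    using MultiTreeDist_le_TreeDist[of d P M p0 ss x y] by auto
  also have "\<dots> \<le> 4 * edge_weight d M l"
    using TreeDist_le[of M d P p0 s x y] s assms by simp
  finally have "MultiTreeDist d P M p0 ss x y \<le> 4 * edge_weight d M l" .
  then have le_l: "ennreal ((MultiTreeDist d P M p0 ss x y)^2) \<le> ?w l"
    using MultiTreeDist_nonneg[of M] assms by (intro ennreal_leI power_mono) auto
  show ?thesis
  proof (cases "H \<le> l")
    case True
    have "?w l \<le> ?w H"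
      using edge_weight_antimono[OF _ True, of M d] assms
      by (intro ennreal_leI power_mono) (auto simp: edge_weight_def)
    then show ?thesis using le_l \<open>x \<noteq> y\<close> unfolding sq_multitree_majorant_def H_def[symmetric]
      by (simp only: if_False) (meson add_increasing2 order_trans zero_le)
  next
    case False
    have "s \<in> A" if "?lca s \<le> l" for s
      using not_same_node_Suc_lca_height[OF assms(1,2) \<open>x \<noteq> y\<close> assms(3)]
        same_node_mono[of "Suc (?lca s)" "Suc l" d M p0 s x y] that
      unfolding A_def separating_shifts_def by auto
    then have "ss \<in> A \<times> A \<times> A" unfolding l_def by (cases ss) auto
    then have "?w l = ?w l * indicator (A \<times> A \<times> A) ss" by simp
    also have "\<dots> \<le> (\<Sum>j<H. ?w j * indicator (separating_shifts d M p0 (Suc j) x y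
        \<times> separating_shifts d M p0 (Suc j) x y \<times> separating_shifts d M p0 (Suc j) x y) ss)"
      using False unfolding A_def by (intro member_le_sum) auto
    finally show ?thesis using le_l \<open>x \<noteq> y\<close> unfolding sq_multitree_majorant_def H_def
      by (simp only: if_False) (meson add_increasing order_trans zero_le)
  qed
qed (simp add: sq_multitree_majorant_def MultiTreeDist_def TreeDist_def)

lemma majorant_series_le:
  fixes t :: real
  assumes M: "0 < M" and t: "0 < t" and MH: "M \<le> 2^H * t" and HM: "0 < H \<Longrightarrow> 2^H * t < 2 * M"
  shows "(4 * edge_weight d M H)^2 + (\<Sum>l<H. (4 * edge_weight d M l)^2 * (3 * t * 2^l / M)^3)
           \<le> 880 * real d * t^2"
proof -
  have sq_ew: "(4 * edge_weight d M l)^2 = 16 * real d * (M / 2^l)^2" for l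
    unfolding edge_weight_def by (simp add: power_mult_distrib power_divide)
  have "M / 2^H \<le> t" using MH by (simp add: divide_le_eq mult.commute)
  then have first: "(4 * edge_weight d M H)^2 \<le> 16 * real d * t^2"
    unfolding sq_ew using M by (intro mult_left_mono power_mono) auto
  have "(4 * edge_weight d M l)^2 * (3 * t * 2^l / M)^3 = 432 * real d * t^3 / M * 2^l" for l
    unfolding sq_ew using M by (simp add: field_simps power2_eq_square power3_eq_cube)
  then have "(\<Sum>l<H. (4 * edge_weight d M l)^2 * (3 * t * 2^l / M)^3)
      = 432 * real d * t^3 / M * (\<Sum>l<H. 2^l)"
    by (simp only: sum_distrib_left)
  also have "(\<Sum>l<H. (2::real)^l) = 2^H - 1"
    by (induction H) auto
  finally have "(\<Sum>l<H. (4 * edge_weight d M l)^2 * (3 * t * 2^l / M)^3)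
      = 432 * real d * t^3 / M * (2^H - 1)" .
  also have "\<dots> \<le> 864 * real d * t^2"
  proof (cases "H = 0")
    case False
    have "432 * real d * t^3 / M * (2^H - 1) \<le> 432 * real d * t^2 * (2^H * t / M)"
      using M t by (simp add: field_simps power2_eq_square power3_eq_cube)
    also have "\<dots> \<le> 432 * real d * t^2 * 2"
      using HM False M by (intro mult_left_mono) (auto simp: divide_le_eq)
    finally show ?thesis by simp
  qed simp
  finally show ?thesis using first by simp
qed

lemma nn_integral_sq_multitree_majorant_le:
  assumes x: "in_Rd d x" and y: "in_Rd d y" and M: "0 < M" and d: "1 \<le> d"
  shows "(\<integral>\<^sup>+ss. sq_multitree_majorant d M p0 x y ss \<partial>shift_triple_distr M)
           \<le> ennreal (880 * (real d)^2 * (Dist d x y)^2)"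
proof (cases "x = y")
  case False
  define t where "t = sqrt (real d) * Dist d x y"
  define H where "H = scale_level d M x y"
  define A where "A l = separating_shifts d M p0 (Suc l) x y" for l
  let ?w = "\<lambda>l. (4 * edge_weight d M l)^2"
  have t: "0 < t" unfolding t_def using Dist_pos[OF x y False] d by simp
  have [measurable]: "A l \<in> sets borel" for l unfolding A_def by (rule separating_shifts_sets)
  have "emeasure (shift_distr M) (A l) \<le> ennreal (3 * (\<Sum>i<d. \<bar>x i - y i\<bar>) * 2^Suc l / (2 * M))" for l
    unfolding A_def by (rule emeasure_separating_shifts_le[OF M]) simp
  also have "3 * (\<Sum>i<d. \<bar>x i - y i\<bar>) * 2^Suc l / (2 * M) \<le> 3 * t * 2^l / M" for l
    using sum_abs_diff_le_sqrt_dim_Dist[where d = d and x = x and y = y] M unfolding t_def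
    by (simp add: divide_right_mono)
  finally have "emeasure (shift_distr M) (A l) \<le> ennreal (3 * t * 2^l / M)" for l
    by (simp add: ennreal_leI order_trans)
  then have "emeasure (shift_distr M) (A l) ^ 3 \<le> ennreal (3 * t * 2^l / M) ^ 3" for l
    by (intro power_mono) auto
  then have cube: "emeasure (shift_triple_distr M) (A l \<times> A l \<times> A l) \<le> ennreal ((3 * t * 2^l / M)^3)" for l
    using M t by (simp add: emeasure_shift_triple_distr_cube ennreal_power)
  have "(\<integral>\<^sup>+ss. sq_multitree_majorant d M p0 x y ss \<partial>shift_triple_distr M)
      = (\<integral>\<^sup>+ss. ennreal (?w H) + (\<Sum>l<H. ennreal (?w l) * indicator (A l \<times> A l \<times> A l) ss)
           \<partial>shift_triple_distr M)"
    unfolding sq_multitree_majorant_def H_def A_def using False by simp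
  also have "\<dots> = ennreal (?w H) + (\<Sum>l<H. ennreal (?w l) * emeasure (shift_triple_distr M) (A l \<times> A l \<times> A l))"
  proof -
    have "(\<lambda>ss. \<Sum>l<H. ennreal (?w l) * indicator (A l \<times> A l \<times> A l) ss)
        \<in> borel_measurable (shift_triple_distr M)"
      by measurable
    note integral_add = nn_integral_add[OF borel_measurable_const this]
    have integral_const: "(\<integral>\<^sup>+ss. ennreal (?w H) \<partial>shift_triple_distr M) = ennreal (?w H)"
      using prob_space.emeasure_space_1[OF prob_space_shift_triple_distr] by simp
    have integral_sum: "(\<integral>\<^sup>+ss. (\<Sum>l<H. ennreal (?w l) * indicator (A l \<times> A l \<times> A l) ss) \<partial>shift_triple_distr M)
        = (\<Sum>l<H. ennreal (?w l) * emeasure (shift_triple_distr M) (A l \<times> A l \<times> A l))"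
      by (subst nn_integral_sum) (auto intro!: sum.cong nn_integral_cmult_indicator)
    show ?thesis unfolding integral_add integral_const integral_sum ..
  qed
  also have "\<dots> \<le> ennreal (?w H) + (\<Sum>l<H. ennreal (?w l) * ennreal ((3 * t * 2^l / M)^3))"
    using cube by (intro add_left_mono sum_mono mult_left_mono) auto
  also have "\<dots> = ennreal (?w H + (\<Sum>l<H. ?w l * (3 * t * 2^l / M)^3))"
  proof -
    have "ennreal (?w l) * ennreal ((3 * t * 2^l / M)^3) = ennreal (?w l * (3 * t * 2^l / M)^3)" for l
      using M t by (simp add: ennreal_mult')
    moreover have "(\<Sum>l<H. ennreal (?w l * (3 * t * 2^l / M)^3))
        = ennreal (\<Sum>l<H. ?w l * (3 * t * 2^l / M)^3)"
      using M t by (intro sum_ennreal) simp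
    moreover have "0 \<le> (\<Sum>l<H. ?w l * (3 * t * 2^l / M)^3)"
      using M t by (intro sum_nonneg) simp
    ultimately show ?thesis by (simp add: ennreal_plus)
  qed
  also have "\<dots> \<le> ennreal (880 * real d * t^2)"
    using scale_level_le[of d x y M] scale_level_less[of d M x y] M t
    unfolding H_def t_def by (intro ennreal_leI majorant_series_le) auto
  also have "880 * real d * t^2 = 880 * (real d)^2 * (Dist d x y)^2"
    unfolding t_def by (simp add: power_mult_distrib power2_eq_square)
  finally show ?thesis .
qed (simp add: sq_multitree_majorant_def)

subsection \<open>Number of iterations\<close>

lemma sample_prob_nonneg: "0 \<le> sample_prob d P M p0 ss S x"
  unfolding sample_prob_def by (auto intro!: divide_nonneg_nonneg sum_nonneg)

lemma accept_prob_nonneg: "0 \<le> accept_prob d P c M p0 ss Query S x"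
  unfolding accept_prob_def by auto

lemma accept_prob_le_1: "accept_prob d P c M p0 ss Query S x \<le> 1"
  unfolding accept_prob_def by auto

text \<open>If \<open>A\<close> bounds the mean \<open>1 / p\<close> of the geometric number of rounds needed for a success,
  then \<open>A + B\<close> is a pre-fixed point of one round that succeeds with probability \<open>p\<close> and
  costs \<open>B\<close> afterwards.\<close>
lemma geometric_retry_le:
  fixes p :: real and A B :: ennreal
  assumes "0 \<le> p" "p \<le> 1" "1 \<le> ennreal p * A"
  shows "1 + ennreal p * B + ennreal (1 - p) * (A + B) \<le> A + B"
proof -
  have "1 + ennreal p * B + ennreal (1 - p) * (A + B)
      \<le> ennreal p * A + ennreal p * B + ennreal (1 - p) * (A + B)"
    using assms(3) by (intro add_right_mono) simp
  also have "\<dots> = (ennreal p + ennreal (1 - p)) * (A + B)"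
    by (simp add: distrib_left distrib_right)
  also have "ennreal p + ennreal (1 - p) = 1"
    using assms(1,2) by (simp flip: ennreal_plus)
  finally show ?thesis by simp
qed

locale rejection_sampling =
  fixes d :: nat and P :: "pt set" and k :: nat and c :: real and M :: real and p0 :: pt
    and Query :: "pt list \<Rightarrow> pt \<Rightarrow> pt"
  assumes dim_pos: "1 \<le> d" and finite_P: "finite P" and P_nonempty: "P \<noteq> {}"
    and P_in_Rd: "\<forall>x\<in>P. in_Rd d x" and k_le_card: "k \<le> card P" and c_gt_1: "1 < c"
    and max_pair_dist_le: "max_pair_dist d P \<le> M" and lsh: "lsh_successful d c P Query"
begin

definition query_dist :: "pt list \<Rightarrow> pt \<Rightarrow> real" where
  "query_dist S x = Dist d x (Query S x)"

definition query_cost :: "pt list \<Rightarrow> real" where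
  "query_cost S = (\<Sum>y\<in>P. (query_dist S y)^2)"

definition tree_cost :: "real \<times> real \<times> real \<Rightarrow> pt list \<Rightarrow> real" where
  "tree_cost ss S = (\<Sum>y\<in>P. (MultiTreeDist_set d P M p0 ss S y)^2)"

definition admissible :: "pt list \<Rightarrow> bool" where
  "admissible S \<longleftrightarrow> set S \<subseteq> P \<and> distinct S \<and> length S < card P"

text \<open>\<open>open_prob S\<close> is the law of the next opened point, which by \<open>sample_accept_eq\<close> does not
  depend on the shifts, and \<open>attempts_majorant S\<close> is a measurable majorant of the expected
  number \<open>1 / accept_rate ss S\<close> of rounds spent on \<open>S\<close>; on states that are never reached it
  is \<open>\<top>\<close>.\<close>

definition open_prob :: "pt list \<Rightarrow> pt \<Rightarrow> real" where
  "open_prob S x = (if S = [] then 1 / real (card P) else (query_dist S x)^2 / query_cost S)"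

definition accept_rate :: "real \<times> real \<times> real \<Rightarrow> pt list \<Rightarrow> real" where
  "accept_rate ss S = (if S = [] then 1 else query_cost S / (c^2 * tree_cost ss S))"

definition attempts_majorant :: "pt list \<Rightarrow> real \<times> real \<times> real \<Rightarrow> ennreal" where
  "attempts_majorant S ss = (if S = [] then 1 else if admissible S then
     ennreal (c^2 / query_cost S) * (\<Sum>y\<in>P. sq_multitree_majorant d M p0 y (Query S y) ss) else \<top>)"

fun iterations_majorant :: "nat \<Rightarrow> pt list \<Rightarrow> real \<times> real \<times> real \<Rightarrow> ennreal" where
  "iterations_majorant 0 S ss = 0"
| "iterations_majorant (Suc n) S ss =
     attempts_majorant S ss + (\<Sum>x\<in>P. ennreal (open_prob S x) * iterations_majorant n (S @ [x]) ss)"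

lemma M_nonneg: "0 \<le> M"
proof -
  obtain x where "x \<in> P" using P_nonempty by blast
  then show ?thesis
    using Dist_le_max_pair_dist[OF finite_P, of x x d] max_pair_dist_le by simp
qed

lemma Query_mem:
  assumes "S \<noteq> []" "set S \<subseteq> P" "x \<in> P"
  shows "Query S x \<in> set S"
  using lsh assms unfolding lsh_successful_def by auto

lemma query_dist_le:
  assumes "S \<noteq> []" "set S \<subseteq> P" "x \<in> P" "z \<in> set S"
  shows "query_dist S x \<le> c * Dist d x z"
proof -
  have "query_dist S x \<le> c * Min ((\<lambda>y. Dist d x y) ` set S)"
    using lsh assms unfolding lsh_successful_def query_dist_def by auto
  also have "\<dots> \<le> c * Dist d x z"
    using assms c_gt_1 by (intro mult_left_mono Min_le) auto
  finally show ?thesis .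
qed

lemma query_dist_nonneg: "0 \<le> query_dist S x"
  unfolding query_dist_def by (rule Dist_nonneg)

lemma admissible_obtain_unopened:
  assumes "admissible S"
  obtains y where "y \<in> P" "y \<notin> set S"
proof -
  have "card (set S) < card P" using assms unfolding admissible_def by (simp add: distinct_card)
  then have "\<not> P \<subseteq> set S" using card_mono[of "set S" P] by auto
  then show ?thesis using that by blast
qed

lemma M_pos:
  assumes "admissible S" "S \<noteq> []"
  shows "0 < M"
proof -
  obtain y where y: "y \<in> P" "y \<notin> set S" using admissible_obtain_unopened assms(1) .
  obtain z where z: "z \<in> set S" using assms(2) by (cases S) auto
  then have "z \<in> P" "y \<noteq> z" using assms y unfolding admissible_def by auto
  then have "0 < Dist d y z" using Dist_pos P_in_Rd y by blast
  also have "\<dots> \<le> M"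
    using Dist_le_max_pair_dist[OF finite_P y(1) \<open>z \<in> P\<close>, of d] max_pair_dist_le by simp
  finally show ?thesis .
qed

lemma MultiTreeDist_set_attained:
  assumes "S \<noteq> []"
  obtains z where "z \<in> set S" "MultiTreeDist_set d P M p0 ss S x = MultiTreeDist d P M p0 ss x z"
proof -
  have "Min ((\<lambda>y. MultiTreeDist d P M p0 ss x y) ` set S) \<in> (\<lambda>y. MultiTreeDist d P M p0 ss x y) ` set S"
    using assms by (intro Min_in) auto
  then obtain z where "z \<in> set S" "Min ((\<lambda>y. MultiTreeDist d P M p0 ss x y) ` set S) = MultiTreeDist d P M p0 ss x z"
    by blast
  then show ?thesis using that assms unfolding MultiTreeDist_set_def by simp
qed

lemma MultiTreeDist_set_le:
  "z \<in> set S \<Longrightarrow> MultiTreeDist_set d P M p0 ss S x \<le> MultiTreeDist d P M p0 ss x z"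
  unfolding MultiTreeDist_set_def by (auto intro: Min_le)

lemma MultiTreeDist_set_nonneg: "0 \<le> MultiTreeDist_set d P M p0 ss S x"
proof (cases "S = []")
  case False
  then obtain z where "MultiTreeDist_set d P M p0 ss S x = MultiTreeDist d P M p0 ss x z"
    using MultiTreeDist_set_attained by metis
  then show ?thesis using MultiTreeDist_nonneg[OF M_nonneg] by simp
qed (simp add: MultiTreeDist_set_def)

lemma query_dist_le_MultiTreeDist_set:
  assumes "admissible S" "S \<noteq> []" "x \<in> P"
  shows "query_dist S x \<le> c * MultiTreeDist_set d P M p0 ss S x"
proof -
  obtain z where z: "z \<in> set S" "MultiTreeDist_set d P M p0 ss S x = MultiTreeDist d P M p0 ss x z"
    using MultiTreeDist_set_attained[OF assms(2)] .
  have SP: "set S \<subseteq> P" using assms(1) unfolding admissible_def by simp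
  have "z \<in> P" using z SP by auto
  have "query_dist S x \<le> c * Dist d x z" using query_dist_le[OF assms(2) SP assms(3) z(1)] .
  also have "\<dots> \<le> c * MultiTreeDist d P M p0 ss x z"
    using Dist_le_MultiTreeDist[OF finite_P P_in_Rd assms(3) \<open>z \<in> P\<close> M_pos[OF assms(1,2)] dim_pos
        max_pair_dist_le] c_gt_1
    by (intro mult_left_mono) auto
  finally show ?thesis using z by simp
qed

lemma query_dist_pos:
  assumes "admissible S" "S \<noteq> []" "y \<in> P" "y \<notin> set S"
  shows "0 < query_dist S y"
proof -
  have SP: "set S \<subseteq> P" using assms(1) unfolding admissible_def by simp
  then have "Query S y \<in> set S" using Query_mem assms(2,3) by blast
  then show ?thesis
    unfolding query_dist_def using Dist_pos P_in_Rd assms(3,4) SP by (metis subsetD)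
qed

lemma query_cost_pos:
  assumes "admissible S" "S \<noteq> []"
  shows "0 < query_cost S"
proof -
  obtain y where y: "y \<in> P" "y \<notin> set S" using admissible_obtain_unopened assms(1) .
  have "0 < (query_dist S y)^2" using query_dist_pos[OF assms y] by simp
  also have "\<dots> \<le> query_cost S"
    unfolding query_cost_def using y finite_P by (intro member_le_sum) auto
  finally show ?thesis .
qed

lemma tree_cost_pos:
  assumes "admissible S" "S \<noteq> []"
  shows "0 < tree_cost ss S"
proof -
  obtain y where y: "y \<in> P" "y \<notin> set S" using admissible_obtain_unopened assms(1) .
  have "0 < c * MultiTreeDist_set d P M p0 ss S y"
    using query_dist_pos[OF assms y] query_dist_le_MultiTreeDist_set[OF assms y(1), of ss] by linarith
  then have "0 < MultiTreeDist_set d P M p0 ss S y"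
    using c_gt_1 by (simp add: zero_less_mult_iff)
  then have "0 < (MultiTreeDist_set d P M p0 ss S y)^2" by simp
  also have "\<dots> \<le> tree_cost ss S"
    unfolding tree_cost_def using y finite_P by (intro member_le_sum) auto
  finally show ?thesis .
qed


lemma card_P_pos: "0 < card P"
  using finite_P P_nonempty by (simp add: card_gt_0_iff)

lemma sample_accept_eq:
  assumes "S = [] \<or> admissible S" "x \<in> P"
  shows "sample_prob d P M p0 ss S x * accept_prob d P c M p0 ss Query S x
           = accept_rate ss S * open_prob S x"
proof (cases "S = []")
  case False
  then have S: "admissible S" "S \<noteq> []" using assms(1) by auto
  let ?m = "MultiTreeDist_set d P M p0 ss S x"
  have T: "0 < tree_cost ss S" and Q: "0 < query_cost S"
    using tree_cost_pos[OF S] query_cost_pos[OF S] by auto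
  have le: "query_dist S x \<le> c * ?m" using query_dist_le_MultiTreeDist_set[OF S assms(2)] .
  have "sample_prob d P M p0 ss S x * accept_prob d P c M p0 ss Query S x
      = (query_dist S x)^2 / (c^2 * tree_cost ss S)"
  proof (cases "?m = 0")
    case True
    then have "query_dist S x = 0" using le query_dist_nonneg[of S x] by simp
    then show ?thesis using True unfolding sample_prob_def by simp
  next
    case False
    then have m: "0 < ?m" using MultiTreeDist_set_nonneg[of ss S x] by simp
    have "(query_dist S x)^2 \<le> (c * ?m)^2" using le query_dist_nonneg by (intro power_mono) auto
    then have "(query_dist S x)^2 / (c^2 * ?m^2) \<le> 1"
      using m c_gt_1 by (simp add: power_mult_distrib)
    then have "accept_prob d P c M p0 ss Query S x = (query_dist S x)^2 / (c^2 * ?m^2)"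
      unfolding accept_prob_def query_dist_def using S by simp
    then show ?thesis
      unfolding sample_prob_def tree_cost_def[symmetric] using m T c_gt_1 by (simp add: field_simps)
  qed
  also have "\<dots> = accept_rate ss S * open_prob S x"
    unfolding accept_rate_def open_prob_def using S Q by simp
  finally show ?thesis .
qed (simp add: sample_prob_def accept_prob_def accept_rate_def open_prob_def MultiTreeDist_set_def)

lemma sum_sample_prob:
  assumes "S = [] \<or> admissible S"
  shows "(\<Sum>x\<in>P. sample_prob d P M p0 ss S x) = 1"
proof -
  have "0 < tree_cost ss S"
  proof (cases "S = []")
    case True
    then show ?thesis using card_P_pos unfolding tree_cost_def MultiTreeDist_set_def by simp
  qed (use assms tree_cost_pos in auto)
  then show ?thesis unfolding sample_prob_def tree_cost_def[symmetric]
    by (simp add: sum_divide_distrib[symmetric] tree_cost_def)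
qed

lemma open_prob_nonneg: "0 \<le> open_prob S x"
  unfolding open_prob_def query_cost_def by (auto intro!: divide_nonneg_nonneg sum_nonneg)

lemma sum_open_prob:
  assumes "S = [] \<or> admissible S"
  shows "(\<Sum>x\<in>P. open_prob S x) = 1"
proof (cases "S = []")
  case False
  then have "0 < query_cost S" using assms query_cost_pos by auto
  then show ?thesis using False unfolding open_prob_def
    by (simp add: sum_divide_distrib[symmetric] query_cost_def[symmetric])
qed (use card_P_pos in \<open>simp add: open_prob_def\<close>)

lemma open_prob_opened:
  assumes "set S \<subseteq> P" "x \<in> set S"
  shows "open_prob S x = 0"
  using query_dist_le[of S x x] query_dist_nonneg[of S x] assms unfolding open_prob_def
  by (cases "S = []") auto

lemma accept_rate_nonneg: "0 \<le> accept_rate ss S"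
  unfolding accept_rate_def query_cost_def tree_cost_def
  by (auto intro!: divide_nonneg_nonneg sum_nonneg mult_nonneg_nonneg)

lemma sum_sample_reject:
  assumes "S = [] \<or> admissible S"
  shows "(\<Sum>x\<in>P. sample_prob d P M p0 ss S x * (1 - accept_prob d P c M p0 ss Query S x))
           = 1 - accept_rate ss S"
  using sample_accept_eq[OF assms] sum_sample_prob[OF assms] sum_open_prob[OF assms]
  by (simp add: right_diff_distrib sum_subtractf sum_distrib_left[symmetric])

lemma accept_rate_le_1:
  assumes "S = [] \<or> admissible S"
  shows "accept_rate ss S \<le> 1"
proof -
  have "0 \<le> (\<Sum>x\<in>P. sample_prob d P M p0 ss S x * (1 - accept_prob d P c M p0 ss Query S x))"
    by (intro sum_nonneg mult_nonneg_nonneg sample_prob_nonneg) (simp add: accept_prob_le_1)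
  then show ?thesis using sum_sample_reject[OF assms] by simp
qed

lemma one_le_accept_rate_mult_attempts_majorant:
  assumes "S = [] \<or> admissible S"
  shows "1 \<le> ennreal (accept_rate ss S) * attempts_majorant S ss"
proof (cases "S = []")
  case False
  then have S: "admissible S" "S \<noteq> []" using assms by auto
  have SP: "set S \<subseteq> P" using S unfolding admissible_def by simp
  have T: "0 < tree_cost ss S" and Q: "0 < query_cost S"
    using tree_cost_pos[OF S] query_cost_pos[OF S] by auto
  have "ennreal (tree_cost ss S) = (\<Sum>y\<in>P. ennreal ((MultiTreeDist_set d P M p0 ss S y)^2))"
    unfolding tree_cost_def by (simp add: sum_ennreal)
  also have "\<dots> \<le> (\<Sum>y\<in>P. sq_multitree_majorant d M p0 y (Query S y) ss)"
  proof (intro sum_mono)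
    fix y assume y: "y \<in> P"
    have q: "Query S y \<in> set S" using Query_mem[OF S(2) SP y] .
    have "(MultiTreeDist_set d P M p0 ss S y)^2 \<le> (MultiTreeDist d P M p0 ss y (Query S y))^2"
      using MultiTreeDist_set_le[OF q] MultiTreeDist_set_nonneg by (intro power_mono) auto
    also have "ennreal \<dots> \<le> sq_multitree_majorant d M p0 y (Query S y) ss"
      using sq_MultiTreeDist_le_majorant P_in_Rd y q SP M_pos[OF S] by blast
    finally show "ennreal ((MultiTreeDist_set d P M p0 ss S y)^2) \<le> sq_multitree_majorant d M p0 y (Query S y) ss"
      by (simp add: ennreal_leI order_trans)
  qed
  finally have "ennreal (1 / tree_cost ss S) * ennreal (tree_cost ss S)
      \<le> ennreal (1 / tree_cost ss S) * (\<Sum>y\<in>P. sq_multitree_majorant d M p0 y (Query S y) ss)"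
    by (rule mult_left_mono) simp
  moreover have "ennreal (1 / tree_cost ss S) * ennreal (tree_cost ss S) = 1"
    using T by (simp flip: ennreal_mult)
  moreover have "ennreal (accept_rate ss S) * ennreal (c^2 / query_cost S) = ennreal (1 / tree_cost ss S)"
    using T Q c_gt_1 unfolding accept_rate_def by (simp add: S flip: ennreal_mult)
  ultimately show ?thesis unfolding attempts_majorant_def using S by (simp add: mult.assoc[symmetric])
qed (simp add: accept_rate_def attempts_majorant_def)


lemma iter_step_le_iterations_majorant:
  "iter_step d P k c M p0 ss Query (\<lambda>S. iterations_majorant (k - length S) S ss) S
     \<le> iterations_majorant (k - length S) S ss"
proof (cases "k \<le> length S")
  case False
  then obtain n where n: "k - length S = Suc n" by (metis Suc_diff_Suc not_le)
  then have n': "k - length (S @ [x]) = n" for x by simp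
  let ?sp = "sample_prob d P M p0 ss S" and ?ap = "accept_prob d P c M p0 ss Query S"
  let ?p = "accept_rate ss S" and ?A = "attempts_majorant S ss"
  let ?G = "\<lambda>x. iterations_majorant n (S @ [x]) ss"
  let ?B = "\<Sum>x\<in>P. ennreal (open_prob S x) * ?G x"
  show ?thesis
  proof (cases "S = [] \<or> admissible S")
    case True
    have "ennreal (?sp x) * (ennreal (?ap x) * ?G x + ennreal (1 - ?ap x) * (?A + ?B))
        = ennreal ?p * (ennreal (open_prob S x) * ?G x) + ennreal (?sp x * (1 - ?ap x)) * (?A + ?B)"
      if "x \<in> P" for x
    proof -
      have "ennreal (?sp x) * ennreal (?ap x) = ennreal ?p * ennreal (open_prob S x)"
        using sample_accept_eq[OF True that, of ss]
        by (simp add: sample_prob_nonneg accept_prob_nonneg accept_rate_nonneg open_prob_nonneg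
            flip: ennreal_mult)
      then show ?thesis
        by (simp add: distrib_left ennreal_mult' sample_prob_nonneg mult.assoc[symmetric])
    qed
    then have "iter_step d P k c M p0 ss Query (\<lambda>S. iterations_majorant (k - length S) S ss) S
        = 1 + ennreal ?p * ?B + (\<Sum>x\<in>P. ennreal (?sp x * (1 - ?ap x))) * (?A + ?B)"
      unfolding iter_step_def n n' using False
      by (simp add: sum.distrib sum_distrib_left sum_distrib_right add.assoc)
    also have "(\<Sum>x\<in>P. ennreal (?sp x * (1 - ?ap x))) = ennreal (1 - ?p)"
      using sum_sample_reject[OF True]
      by (simp add: sum_ennreal sample_prob_nonneg accept_prob_le_1)
    also have "1 + ennreal ?p * ?B + ennreal (1 - ?p) * (?A + ?B) \<le> ?A + ?B"
      using accept_rate_nonneg accept_rate_le_1[OF True]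
        one_le_accept_rate_mult_attempts_majorant[OF True]
      by (rule geometric_retry_le)
    finally show ?thesis unfolding n by simp
  qed (simp add: n attempts_majorant_def)
qed (simp add: iter_step_def)

lemma expected_iters_fixed_le: "expected_iters_fixed d P k c M p0 Query ss \<le> iterations_majorant k [] ss"
proof -
  have "lfp (iter_step d P k c M p0 ss Query) \<le> (\<lambda>S. iterations_majorant (k - length S) S ss)"
    by (intro lfp_lowerbound le_funI iter_step_le_iterations_majorant)
  then show ?thesis unfolding expected_iters_fixed_def by (auto dest: le_funD[of _ _ "[]"])
qed


lemma borel_measurable_attempts_majorant [measurable]:
  "attempts_majorant S \<in> borel_measurable (shift_triple_distr M)"
  unfolding attempts_majorant_def[abs_def] by measurable

lemma borel_measurable_iterations_majorant [measurable]:
  "iterations_majorant n S \<in> borel_measurable (shift_triple_distr M)"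
proof (induction n arbitrary: S)
  case (Suc n)
  have [measurable]: "iterations_majorant n S' \<in> borel_measurable (shift_triple_distr M)" for S'
    by (rule Suc.IH)
  show ?case unfolding iterations_majorant.simps[abs_def] by measurable
qed (simp add: iterations_majorant.simps(1)[abs_def])

lemma nn_integral_attempts_majorant_le:
  assumes "S = [] \<or> admissible S"
  shows "(\<integral>\<^sup>+ss. attempts_majorant S ss \<partial>shift_triple_distr M) \<le> ennreal (880 * c^2 * (real d)^2)"
proof (cases "S = []")
  case True
  have "1 \<le> c^2" "1 \<le> (real d)^2" using c_gt_1 dim_pos by (simp_all add: one_le_power)
  then have "1 \<le> c^2 * (real d)^2" using mult_mono[of 1 "c^2" 1 "(real d)^2"] by simp
  then show ?thesis
    using True prob_space.emeasure_space_1[OF prob_space_shift_triple_distr]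
    by (simp add: attempts_majorant_def)
next
  case False
  then have S: "admissible S" "S \<noteq> []" using assms by auto
  have SP: "set S \<subseteq> P" using S unfolding admissible_def by simp
  have Q: "0 < query_cost S" using query_cost_pos[OF S] .
  have "(\<integral>\<^sup>+ss. attempts_majorant S ss \<partial>shift_triple_distr M)
      = ennreal (c^2 / query_cost S) *
        (\<Sum>y\<in>P. \<integral>\<^sup>+ss. sq_multitree_majorant d M p0 y (Query S y) ss \<partial>shift_triple_distr M)"
    using S unfolding attempts_majorant_def by (simp add: nn_integral_cmult nn_integral_sum)
  also have "\<dots> \<le> ennreal (c^2 / query_cost S) * (\<Sum>y\<in>P. ennreal (880 * (real d)^2 * (query_dist S y)^2))"
  proof (intro mult_left_mono sum_mono)
    fix y assume y: "y \<in> P"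
    then have "Query S y \<in> P" using Query_mem[OF S(2) SP y] SP by auto
    then show "(\<integral>\<^sup>+ss. sq_multitree_majorant d M p0 y (Query S y) ss \<partial>shift_triple_distr M)
        \<le> ennreal (880 * (real d)^2 * (query_dist S y)^2)"
      unfolding query_dist_def using nn_integral_sq_multitree_majorant_le P_in_Rd y M_pos[OF S] dim_pos
      by blast
  qed simp
  also have "(\<Sum>y\<in>P. ennreal (880 * (real d)^2 * (query_dist S y)^2)) = ennreal (880 * (real d)^2 * query_cost S)"
    unfolding query_cost_def sum_distrib_left by (rule sum_ennreal) simp
  also have "ennreal (c^2 / query_cost S) * \<dots> = ennreal (c^2 / query_cost S * (880 * (real d)^2 * query_cost S))"
    using Q by (intro ennreal_mult[symmetric]) auto
  also have "c^2 / query_cost S * (880 * (real d)^2 * query_cost S) = 880 * c^2 * (real d)^2"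
    using Q by simp
  finally show ?thesis .
qed

lemma nn_integral_iterations_majorant_le:
  assumes "set S \<subseteq> P" "distinct S" "length S + n \<le> card P"
  shows "(\<integral>\<^sup>+ss. iterations_majorant n S ss \<partial>shift_triple_distr M) \<le> ennreal (real n * (880 * c^2 * (real d)^2))"
  using assms
proof (induction n arbitrary: S)
  case (Suc n)
  let ?C = "880 * c^2 * (real d)^2"
  have S: "S = [] \<or> admissible S" using Suc.prems unfolding admissible_def by auto
  have IH: "ennreal (open_prob S x) * (\<integral>\<^sup>+ss. iterations_majorant n (S @ [x]) ss \<partial>shift_triple_distr M)
      \<le> ennreal (open_prob S x) * ennreal (real n * ?C)" if "x \<in> P" for x
  proof (cases "x \<in> set S")
    case False
    then show ?thesis using Suc.prems that by (intro mult_left_mono Suc.IH) auto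
  qed (simp add: open_prob_opened[OF Suc.prems(1)])
  have "(\<integral>\<^sup>+ss. iterations_majorant (Suc n) S ss \<partial>shift_triple_distr M)
      = (\<integral>\<^sup>+ss. attempts_majorant S ss \<partial>shift_triple_distr M)
        + (\<Sum>x\<in>P. ennreal (open_prob S x) * (\<integral>\<^sup>+ss. iterations_majorant n (S @ [x]) ss \<partial>shift_triple_distr M))"
    by (simp add: nn_integral_add nn_integral_sum nn_integral_cmult)
  also have "\<dots> \<le> ennreal ?C + (\<Sum>x\<in>P. ennreal (open_prob S x) * ennreal (real n * ?C))"
    using nn_integral_attempts_majorant_le[OF S] IH by (intro add_mono sum_mono) auto
  also have "(\<Sum>x\<in>P. ennreal (open_prob S x) * ennreal (real n * ?C)) = ennreal (real n * ?C)"
    using sum_open_prob[OF S]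
    by (simp add: open_prob_nonneg sum_ennreal sum_distrib_right[symmetric] flip: ennreal_mult)
  also have "ennreal ?C + ennreal (real n * ?C) = ennreal (real (Suc n) * ?C)"
    by (simp add: algebra_simps flip: ennreal_plus)
  finally show ?case .
qed (simp add: iterations_majorant.simps(1)[abs_def])

lemma expected_iterations_le:
  "expected_iterations d P k c M p0 Query \<le> ennreal (880 * c^2 * (real d)^2 * real k)"
proof -
  have "expected_iterations d P k c M p0 Query \<le> (\<integral>\<^sup>+ss. iterations_majorant k [] ss \<partial>shift_triple_distr M)"
    unfolding expected_iterations_def by (intro nn_integral_mono expected_iters_fixed_le)
  also have "\<dots> \<le> ennreal (real k * (880 * c^2 * (real d)^2))"
    using k_le_card by (intro nn_integral_iterations_majorant_le) auto
  finally show ?thesis by (simp add: mult_ac)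
qed

end

theorem mainTheorem8:
  "\<exists>C::real. C > 0 \<and>
     (\<forall>(d::nat) (P::pt set) (k::nat) (c::real) (M::real) (p0::pt) (Query::pt list \<Rightarrow> pt \<Rightarrow> pt).
        d \<ge> 1 \<and> finite P \<and> P \<noteq> {} \<and> (\<forall>x\<in>P. in_Rd d x) \<and> k \<le> card P \<and> c > 1 \<and>
        max_pair_dist d P \<le> M \<and> M \<le> 2 * max_pair_dist d P \<and> p0 \<in> P \<and>
        lsh_successful d c P Query
        \<longrightarrow> expected_iterations d P k c M p0 Query \<le> ennreal (C * c^2 * (real d)^2 * real k))"
proof (intro exI[of _ 880] conjI allI impI)
  fix d P k c M p0 Query
  assume "d \<ge> 1 \<and> finite P \<and> P \<noteq> {} \<and> (\<forall>x\<in>P. in_Rd d x) \<and> k \<le> card P \<and> c > 1 \<and>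
    max_pair_dist d P \<le> M \<and> M \<le> 2 * max_pair_dist d P \<and> p0 \<in> P \<and> lsh_successful d c P Query"
  then interpret rejection_sampling d P k c M p0 Query
    by unfold_locales auto
  show "expected_iterations d P k c M p0 Query \<le> ennreal (880 * c^2 * (real d)^2 * real k)"
    by (rule expected_iterations_le)
qed simp

end
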